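(* Let ${\cal I}_1,\dots,{\cal I}_k$ ($k\ge 2$) be nonempty subsets of $E$ and let $\widetilde\lessdot$ be the restriction of $\lessdot$ to the $2k$ handles $\mathrm{LH}({\cal I}_i),\mathrm{UH}({\cal I}_i)$, $i=1,\dots,k$ (assume these $2k$ endpoints are distinct). Then: (i) if the two $\widetilde\lessdot$-smallest handles are lower handles $\mathrm{LH}({\cal I}_i)$ and $\mathrm{LH}({\cal I}_j)$ with $i\ne j$, then no ${\cal I}_t$ is minimal; (ii) if the $\widetilde\lessdot$-smallest handle is $\mathrm{LH}({\cal I}_i)$, then no ${\cal I}_t$ with $t\neq i$ is minimal, and ${\cal I}_i$ is minimal iff no $\mathrm{LH}({\cal I}_j)$ with $j\ne i$ satisfies $\mathrm{LH}({\cal I}_j)\lessdot\mathrm{UH}({\cal I}_i)$; (iii) if $\widetilde\lessdot$ begins with a maximal initial block of upper handles $\mathrm{UH}({\cal I}_{i_1}),\dots,\mathrm{UH}({\cal I}_{i_s})$ ($s\ge1$) followed by the lower handle $\mathrm{LH}({\cal I}_j)$, then each ${\cal I}_{i_1},\dots,{\cal I}_{i_s}$ is minimal, ${\cal I}_j$ is minimal iff no lower handle $\mathrm{LH}({\cal I}_t)$ with $t\ne j$ satisfies $\mathrm{LH}({\cal I}_t)\lessdot\mathrm{UH}({\cal I}_j)$, and no other ${\cal I}_t$ is minimal.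
   Context: Let $E$ be a finite set and for each $a\in E$ let $I_a=(\ell_a,r_a)$ be a nonempty open real interval, $\ell_a<r_a$; define $a\vartriangleleft b$ iff $r_a\le\ell_b$ (an interval order). Let $\lessdot$ be the linear ordering of all endpoints $\ell_a,r_a$ by real value from left to right, where among endpoints with equal real value all right endpoints come first (arbitrary order among them) and then all left endpoints (arbitrary order). For nonempty ${\cal I}_1,{\cal I}_2\subseteq E$, ${\cal I}_1\vartriangleleft{\cal I}_2$ means there exist $a\in{\cal I}_1$, $b\in{\cal I}_2$ with $a\vartriangleleft b$. For nonempty ${\cal I}\subseteq E$, $\mathrm{LH}({\cal I})$ is the $\lessdot$-minimum of $\{r_x:x\in{\cal I}\}$ and $\mathrm{UH}({\cal I})$ is the $\lessdot$-maximum of $\{\ell_x:x\in{\cal I}\}$. Among ${\cal I}_1,\dots,{\cal I}_k$, ${\cal I}_j$ is minimal if there is no $i\ne j$ with ${\cal I}_i\vartriangleleft{\cal I}_j$. *)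

theory Defs
  imports Main "HOL.Real"
begin

datatype 'a endpt = Lft 'a | Rgt 'a

fun epval :: "('a \<Rightarrow> real) \<Rightarrow> ('a \<Rightarrow> real) \<Rightarrow> 'a endpt \<Rightarrow> real" where
  "epval l r (Lft a) = l a"
| "epval l r (Rgt a) = r a"

definition endpts :: "'a set \<Rightarrow> 'a endpt set" where
  "endpts E = Lft ` E \<union> Rgt ` E"

definition admissible_order ::
  "'a set \<Rightarrow> ('a \<Rightarrow> real) \<Rightarrow> ('a \<Rightarrow> real) \<Rightarrow> ('a endpt \<Rightarrow> 'a endpt \<Rightarrow> bool) \<Rightarrow> bool" where
  "admissible_order E l r lt \<longleftrightarrow>
     (\<forall>p\<in>endpts E. \<not> lt p p) \<and>
     (\<forall>p\<in>endpts E. \<forall>q\<in>endpts E. \<forall>s\<in>endpts E. lt p q \<longrightarrow> lt q s \<longrightarrow> lt p s) \<and>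
     (\<forall>p\<in>endpts E. \<forall>q\<in>endpts E. p \<noteq> q \<longrightarrow> lt p q \<or> lt q p) \<and>
     (\<forall>p\<in>endpts E. \<forall>q\<in>endpts E. epval l r p < epval l r q \<longrightarrow> lt p q) \<and>
     (\<forall>a\<in>E. \<forall>b\<in>E. r a = l b \<longrightarrow> lt (Rgt a) (Lft b))"

definition iv_lt :: "('a \<Rightarrow> real) \<Rightarrow> ('a \<Rightarrow> real) \<Rightarrow> 'a \<Rightarrow> 'a \<Rightarrow> bool" where
  "iv_lt l r a b \<longleftrightarrow> r a \<le> l b"

definition set_lt :: "('a \<Rightarrow> real) \<Rightarrow> ('a \<Rightarrow> real) \<Rightarrow> 'a set \<Rightarrow> 'a set \<Rightarrow> bool" where
  "set_lt l r I1 I2 \<longleftrightarrow> (\<exists>a\<in>I1. \<exists>b\<in>I2. iv_lt l r a b)"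

definition LH :: "('a endpt \<Rightarrow> 'a endpt \<Rightarrow> bool) \<Rightarrow> 'a set \<Rightarrow> 'a endpt" where
  "LH lt I = (THE p. p \<in> Rgt ` I \<and> (\<forall>q\<in>Rgt ` I. q \<noteq> p \<longrightarrow> lt p q))"

definition UH :: "('a endpt \<Rightarrow> 'a endpt \<Rightarrow> bool) \<Rightarrow> 'a set \<Rightarrow> 'a endpt" where
  "UH lt I = (THE p. p \<in> Lft ` I \<and> (\<forall>q\<in>Lft ` I. q \<noteq> p \<longrightarrow> lt q p))"

definition is_minimal :: "('a \<Rightarrow> real) \<Rightarrow> ('a \<Rightarrow> real) \<Rightarrow> (nat \<Rightarrow> 'a set) \<Rightarrow> nat \<Rightarrow> nat \<Rightarrow> bool" where
  "is_minimal l r I k j \<longleftrightarrow> \<not> (\<exists>i<k. i \<noteq> j \<and> set_lt l r (I i) (I j))"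

end

theory Submission
  imports Defs
begin

text \<open>Since right endpoints of equal value precede left ones, an admissible order compares
  \<open>Rgt a\<close> with \<open>Lft b\<close> exactly as the interval order compares \<open>a\<close> with \<open>b\<close>.
  Consequently \<open>\<I>\<^sub>1 \<lhd> \<I>\<^sub>2\<close> holds iff \<open>LH \<I>\<^sub>1\<close> precedes \<open>UH \<I>\<^sub>2\<close>, so \<open>\<I>\<^sub>t\<close> is minimal
  iff no other lower handle precedes \<open>UH \<I>\<^sub>t\<close>. All three claims are read off from this
  criterion: a lower handle preceding every other handle lies below all upper handles,
  and an upper handle preceding the first lower handle lies below all of them.\<close>

definition strict_linear_on :: "'b set \<Rightarrow> ('b \<Rightarrow> 'b \<Rightarrow> bool) \<Rightarrow> bool" where
  "strict_linear_on D lt \<longleftrightarrow>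
     (\<forall>p\<in>D. \<not> lt p p) \<and>
     (\<forall>p\<in>D. \<forall>q\<in>D. \<forall>s\<in>D. lt p q \<longrightarrow> lt q s \<longrightarrow> lt p s) \<and>
     (\<forall>p\<in>D. \<forall>q\<in>D. p \<noteq> q \<longrightarrow> lt p q \<or> lt q p)"

lemma strict_linear_on_converse:
  "strict_linear_on D lt \<Longrightarrow> strict_linear_on D (\<lambda>p q. lt q p)"
  unfolding strict_linear_on_def by blast

lemma strict_linear_on_asym:
  "strict_linear_on D lt \<Longrightarrow> p \<in> D \<Longrightarrow> q \<in> D \<Longrightarrow> lt p q \<Longrightarrow> \<not> lt q p"
  unfolding strict_linear_on_def by blast

lemma strict_linear_on_trans:
  "strict_linear_on D lt \<Longrightarrow> p \<in> D \<Longrightarrow> q \<in> D \<Longrightarrow> s \<in> D \<Longrightarrow> lt p q \<Longrightarrow> lt q s \<Longrightarrow> lt p s"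
  unfolding strict_linear_on_def by blast

lemma strict_linear_on_total:
  "strict_linear_on D lt \<Longrightarrow> p \<in> D \<Longrightarrow> q \<in> D \<Longrightarrow> p \<noteq> q \<Longrightarrow> lt p q \<or> lt q p"
  unfolding strict_linear_on_def by blast

lemma strict_linear_on_ex1_least:
  assumes lin: "strict_linear_on D lt" and "finite S" "S \<noteq> {}" "S \<subseteq> D"
  shows "\<exists>!p. p \<in> S \<and> (\<forall>q\<in>S. q \<noteq> p \<longrightarrow> lt p q)"
proof (rule ex_ex1I)
  show "\<exists>p. p \<in> S \<and> (\<forall>q\<in>S. q \<noteq> p \<longrightarrow> lt p q)"
    using \<open>finite S\<close> \<open>S \<noteq> {}\<close> \<open>S \<subseteq> D\<close>
  proof (induction S rule: finite_ne_induct)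
    case (singleton x)
    then show ?case by blast
  next
    case (insert x F)
    have D: "x \<in> D" "F \<subseteq> D" using insert.prems by simp_all
    obtain p where p: "p \<in> F" "\<forall>q\<in>F. q \<noteq> p \<longrightarrow> lt p q"
      using insert.IH[OF D(2)] by blast
    have "p \<in> D" "x \<noteq> p" using D(2) p(1) insert.hyps by auto
    consider "lt x p" | "lt p x"
      using strict_linear_on_total[OF lin D(1) \<open>p \<in> D\<close> \<open>x \<noteq> p\<close>] by blast
    then show ?case
    proof cases
      case 1
      have "lt x q" if "q \<in> F" "q \<noteq> p" for q
        using strict_linear_on_trans[OF lin D(1) \<open>p \<in> D\<close>, of q] 1 p(2) that D(2) by blast
      with 1 show ?thesis by blast
    next
      case 2
      with p show ?thesis by blast
    qed
  qed
next
  fix p p'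
  assume p: "p \<in> S \<and> (\<forall>q\<in>S. q \<noteq> p \<longrightarrow> lt p q)"
    and p': "p' \<in> S \<and> (\<forall>q\<in>S. q \<noteq> p' \<longrightarrow> lt p' q)"
  show "p = p'"
  proof (rule ccontr)
    assume "p \<noteq> p'"
    with p p' have "lt p p'" "lt p' p" by auto
    moreover have "p \<in> D" "p' \<in> D" using p p' \<open>S \<subseteq> D\<close> by auto
    ultimately show False using strict_linear_on_asym[OF lin] by blast
  qed
qed

lemma admissible_order_strict_linear_on:
  "admissible_order E l r lt \<Longrightarrow> strict_linear_on (endpts E) lt"
  unfolding admissible_order_def strict_linear_on_def by (elim conjE) (intro conjI; assumption)

lemma Rgt_Lft_in_endpts: "a \<in> E \<Longrightarrow> Rgt a \<in> endpts E" "a \<in> E \<Longrightarrow> Lft a \<in> endpts E"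
  unfolding endpts_def by auto

lemma admissible_order_Rgt_Lft_iff:
  assumes ord: "admissible_order E l r lt" and "a \<in> E" "b \<in> E"
  shows "lt (Rgt a) (Lft b) \<longleftrightarrow> r a \<le> l b"
proof -
  have ends: "Rgt a \<in> endpts E" "Lft b \<in> endpts E"
    using \<open>a \<in> E\<close> \<open>b \<in> E\<close> by (auto intro: Rgt_Lft_in_endpts)
  have val: "\<forall>p\<in>endpts E. \<forall>q\<in>endpts E. epval l r p < epval l r q \<longrightarrow> lt p q"
    using ord unfolding admissible_order_def by (elim conjE)
  have tie: "\<forall>a\<in>E. \<forall>b\<in>E. r a = l b \<longrightarrow> lt (Rgt a) (Lft b)"
    using ord unfolding admissible_order_def by (elim conjE)
  show ?thesis
  proof
    assume "lt (Rgt a) (Lft b)"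
    then have "\<not> lt (Lft b) (Rgt a)"
      using strict_linear_on_asym[OF admissible_order_strict_linear_on[OF ord]] ends by blast
    then show "r a \<le> l b" using val[rule_format, OF ends(2,1)] by fastforce
  next
    assume "r a \<le> l b"
    then show "lt (Rgt a) (Lft b)"
      using val[rule_format, OF ends] tie \<open>a \<in> E\<close> \<open>b \<in> E\<close> by (cases "r a = l b") auto
  qed
qed

lemma LH_least:
  assumes "finite E" "admissible_order E l r lt" "A \<subseteq> E" "A \<noteq> {}"
  shows "LH lt A \<in> Rgt ` A \<and> (\<forall>q\<in>Rgt ` A. q \<noteq> LH lt A \<longrightarrow> lt (LH lt A) q)"
  unfolding LH_def
proof (rule theI')
  have "finite (Rgt ` A)" "Rgt ` A \<noteq> {}" "Rgt ` A \<subseteq> endpts E"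
    using finite_subset[OF assms(3,1)] assms(3,4) by (auto intro: Rgt_Lft_in_endpts)
  then show "\<exists>!p. p \<in> Rgt ` A \<and> (\<forall>q\<in>Rgt ` A. q \<noteq> p \<longrightarrow> lt p q)"
    by (rule strict_linear_on_ex1_least[OF admissible_order_strict_linear_on[OF assms(2)]])
qed

lemma UH_greatest:
  assumes "finite E" "admissible_order E l r lt" "A \<subseteq> E" "A \<noteq> {}"
  shows "UH lt A \<in> Lft ` A \<and> (\<forall>q\<in>Lft ` A. q \<noteq> UH lt A \<longrightarrow> lt q (UH lt A))"
  unfolding UH_def
proof (rule theI')
  have "finite (Lft ` A)" "Lft ` A \<noteq> {}" "Lft ` A \<subseteq> endpts E"
    using finite_subset[OF assms(3,1)] assms(3,4) by (auto intro: Rgt_Lft_in_endpts)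
  then show "\<exists>!p. p \<in> Lft ` A \<and> (\<forall>q\<in>Lft ` A. q \<noteq> p \<longrightarrow> lt q p)"
    by (rule strict_linear_on_ex1_least[OF strict_linear_on_converse
          [OF admissible_order_strict_linear_on[OF assms(2)]]])
qed

lemma set_lt_iff_LH_UH:
  assumes fin: "finite E" and ord: "admissible_order E l r lt"
    and A: "A \<subseteq> E" "A \<noteq> {}" and B: "B \<subseteq> E" "B \<noteq> {}"
  shows "set_lt l r A B \<longleftrightarrow> lt (LH lt A) (UH lt B)"
proof -
  note trans = strict_linear_on_trans[OF admissible_order_strict_linear_on[OF ord]]
  have LH_in: "LH lt A \<in> Rgt ` A"
    and LH_le: "\<And>a. a \<in> A \<Longrightarrow> Rgt a \<noteq> LH lt A \<Longrightarrow> lt (LH lt A) (Rgt a)"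
    using LH_least[OF fin ord A] by blast+
  have UH_in: "UH lt B \<in> Lft ` B"
    and UH_ge: "\<And>b. b \<in> B \<Longrightarrow> Lft b \<noteq> UH lt B \<Longrightarrow> lt (Lft b) (UH lt B)"
    using UH_greatest[OF fin ord B] by blast+
  have Rgt_in: "Rgt a \<in> endpts E" if "a \<in> A" for a
    using that A(1) by (auto intro: Rgt_Lft_in_endpts)
  have Lft_in: "Lft b \<in> endpts E" if "b \<in> B" for b
    using that B(1) by (auto intro: Rgt_Lft_in_endpts)
  show ?thesis
  proof
    assume "set_lt l r A B"
    then obtain a b where ab: "a \<in> A" "b \<in> B" "r a \<le> l b"
      unfolding set_lt_def iv_lt_def by blast
    then have "lt (Rgt a) (Lft b)"
      using admissible_order_Rgt_Lft_iff[OF ord] A(1) B(1) by blast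
    moreover have LH_E: "LH lt A \<in> endpts E" and UH_E: "UH lt B \<in> endpts E"
      using LH_in UH_in Rgt_in Lft_in by auto
    ultimately have "lt (LH lt A) (Lft b)"
      using LH_le[OF ab(1)] trans[OF LH_E Rgt_in[OF ab(1)] Lft_in[OF ab(2)]] by fastforce
    then show "lt (LH lt A) (UH lt B)"
      using UH_ge[OF ab(2)] trans[OF LH_E Lft_in[OF ab(2)] UH_E] by fastforce
  next
    assume lt: "lt (LH lt A) (UH lt B)"
    obtain a b where "a \<in> A" "LH lt A = Rgt a" "b \<in> B" "UH lt B = Lft b"
      using LH_in UH_in by blast
    then show "set_lt l r A B"
      unfolding set_lt_def iv_lt_def
      using lt admissible_order_Rgt_Lft_iff[OF ord] A(1) B(1) by (metis subsetD)
  qed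
qed

locale interval_family =
  fixes E :: "'a set" and l r :: "'a \<Rightarrow> real"
    and lt :: "'a endpt \<Rightarrow> 'a endpt \<Rightarrow> bool"
    and I :: "nat \<Rightarrow> 'a set" and k :: nat
  assumes finE: "finite E"
    and order: "admissible_order E l r lt"
    and members: "\<forall>i<k. I i \<subseteq> E \<and> I i \<noteq> {}"
begin

abbreviation L :: "nat \<Rightarrow> 'a endpt" where "L i \<equiv> LH lt (I i)"
abbreviation U :: "nat \<Rightarrow> 'a endpt" where "U i \<equiv> UH lt (I i)"

lemma member_subset: "i < k \<Longrightarrow> I i \<subseteq> E" and member_nonempty: "i < k \<Longrightarrow> I i \<noteq> {}"
  using members by simp_all

lemma L_Rgt: "i < k \<Longrightarrow> \<exists>a\<in>E. L i = Rgt a"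
  using conjunct1[OF LH_least[OF finE order member_subset member_nonempty]] member_subset by blast

lemma U_Lft: "i < k \<Longrightarrow> \<exists>a\<in>E. U i = Lft a"
  using conjunct1[OF UH_greatest[OF finE order member_subset member_nonempty]] member_subset by blast

lemma L_in_endpts: "i < k \<Longrightarrow> L i \<in> endpts E"
  by (metis L_Rgt Rgt_Lft_in_endpts(1))

lemma U_in_endpts: "i < k \<Longrightarrow> U i \<in> endpts E"
  by (metis U_Lft Rgt_Lft_in_endpts(2))

lemma L_neq_U: "i < k \<Longrightarrow> t < k \<Longrightarrow> L i \<noteq> U t"
  by (metis L_Rgt U_Lft endpt.distinct(2))

lemma is_minimal_iff:
  "t < k \<Longrightarrow> is_minimal l r I k t \<longleftrightarrow> \<not> (\<exists>i<k. i \<noteq> t \<and> lt (L i) (U t))"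
  unfolding is_minimal_def using set_lt_iff_LH_UH[OF finE order] members by auto

lemma not_minimal_if_L_less_U:
  "i < k \<Longrightarrow> t < k \<Longrightarrow> i \<noteq> t \<Longrightarrow> lt (L i) (U t) \<Longrightarrow> \<not> is_minimal l r I k t"
  using is_minimal_iff by blast

lemma not_minimal_if_not_U_less_L:
  assumes "j < k" "t < k" "t \<noteq> j" "\<not> lt (U t) (L j)"
  shows "\<not> is_minimal l r I k t"
proof -
  have "lt (L j) (U t)"
    using strict_linear_on_total[OF admissible_order_strict_linear_on[OF order]
        L_in_endpts[OF \<open>j < k\<close>] U_in_endpts[OF \<open>t < k\<close>] L_neq_U[OF \<open>j < k\<close> \<open>t < k\<close>]]
      assms(4) by blast
  then show ?thesis using not_minimal_if_L_less_U assms by blast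
qed

lemma minimal_if_U_less_least_L:
  assumes "j < k" and least: "\<forall>i<k. i \<noteq> j \<longrightarrow> lt (L j) (L i)"
    and "t < k" and U_less: "lt (U t) (L j)"
  shows "is_minimal l r I k t"
proof -
  note lin = admissible_order_strict_linear_on[OF order]
  have "\<not> lt (L i) (U t)" if "i < k" for i
  proof
    assume "lt (L i) (U t)"
    then have "lt (L i) (L j)"
      using strict_linear_on_trans[OF lin L_in_endpts[OF \<open>i < k\<close>] U_in_endpts[OF \<open>t < k\<close>]
          L_in_endpts[OF \<open>j < k\<close>]] U_less by blast
    moreover have "i = j \<or> lt (L j) (L i)" using least \<open>i < k\<close> by blast
    ultimately show False
      using strict_linear_on_asym[OF lin L_in_endpts[OF \<open>i < k\<close>] L_in_endpts[OF \<open>j < k\<close>]]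
      by auto
  qed
  then show ?thesis using is_minimal_iff \<open>t < k\<close> by blast
qed

end

theorem mainTheorem7:
  fixes E :: "'a set" and l r :: "'a \<Rightarrow> real"
    and lt :: "'a endpt \<Rightarrow> 'a endpt \<Rightarrow> bool"
    and I :: "nat \<Rightarrow> 'a set" and k :: nat
  assumes finE: "finite E"
    and intervals: "\<forall>a\<in>E. l a < r a"
    and order: "admissible_order E l r lt"
    and k2: "k \<ge> 2"
    and sub: "\<forall>i<k. I i \<subseteq> E \<and> I i \<noteq> {}"
    and distLH: "inj_on (\<lambda>i. LH lt (I i)) {..<k}"
    and distUH: "inj_on (\<lambda>i. UH lt (I i)) {..<k}"
  defines "H \<equiv> (\<lambda>i. LH lt (I i)) ` {..<k} \<union> (\<lambda>i. UH lt (I i)) ` {..<k}"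
  shows
    "(\<forall>i<k. \<forall>j<k. i \<noteq> j \<longrightarrow>
        (\<forall>h\<in>H - {LH lt (I i), LH lt (I j)}. lt (LH lt (I i)) h \<and> lt (LH lt (I j)) h) \<longrightarrow>
        (\<forall>t<k. \<not> is_minimal l r I k t))
     \<and>
     (\<forall>i<k. (\<forall>h\<in>H. h \<noteq> LH lt (I i) \<longrightarrow> lt (LH lt (I i)) h) \<longrightarrow>
        (\<forall>t<k. t \<noteq> i \<longrightarrow> \<not> is_minimal l r I k t) \<and>
        (is_minimal l r I k i \<longleftrightarrow>
           \<not> (\<exists>j<k. j \<noteq> i \<and> lt (LH lt (I j)) (UH lt (I i)))))
     \<and>
     (\<forall>j<k. (\<forall>t<k. t \<noteq> j \<longrightarrow> lt (LH lt (I j)) (LH lt (I t))) \<longrightarrow>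
        (\<exists>t<k. lt (UH lt (I t)) (LH lt (I j))) \<longrightarrow>
        (\<forall>t<k. lt (UH lt (I t)) (LH lt (I j)) \<longrightarrow> is_minimal l r I k t) \<and>
        (is_minimal l r I k j \<longleftrightarrow>
           \<not> (\<exists>t<k. t \<noteq> j \<and> lt (LH lt (I t)) (UH lt (I j)))) \<and>
        (\<forall>t<k. t \<noteq> j \<longrightarrow> \<not> lt (UH lt (I t)) (LH lt (I j)) \<longrightarrow> \<not> is_minimal l r I k t))"
proof -
  interpret interval_family E l r lt I k
    using finE order sub by unfold_locales
  have U_in_H: "U t \<in> H - {L i, L j}" if "i < k" "j < k" "t < k" for i j t
    using L_neq_U[of i t] L_neq_U[of j t] that unfolding H_def by auto
  show ?thesis
  proof (intro conjI allI impI)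
    fix i j t
    assume "i < k" "j < k" "i \<noteq> j" and "\<forall>h\<in>H - {L i, L j}. lt (L i) h \<and> lt (L j) h" and "t < k"
    \<comment> \<open>at least one of \<open>i\<close>, \<open>j\<close> differs from \<open>t\<close>\<close>
    then show "\<not> is_minimal l r I k t"
      using U_in_H[of i j t] not_minimal_if_L_less_U by metis
  next
    fix i t
    assume "i < k" "\<forall>h\<in>H. h \<noteq> L i \<longrightarrow> lt (L i) h" "t < k" "t \<noteq> i"
    then show "\<not> is_minimal l r I k t"
      using U_in_H[of i i t] not_minimal_if_L_less_U by blast
  next
    fix i assume "i < k"
    then show "is_minimal l r I k i \<longleftrightarrow> \<not> (\<exists>j<k. j \<noteq> i \<and> lt (L j) (U i))"
      by (rule is_minimal_iff)
  next
    fix j t assume "j < k" "\<forall>t<k. t \<noteq> j \<longrightarrow> lt (L j) (L t)" "t < k" "lt (U t) (L j)"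
    then show "is_minimal l r I k t" by (rule minimal_if_U_less_least_L)
  next
    fix j assume "j < k"
    then show "is_minimal l r I k j \<longleftrightarrow> \<not> (\<exists>t<k. t \<noteq> j \<and> lt (L t) (U j))"
      by (rule is_minimal_iff)
  next
    fix j t assume "j < k" "t < k" "t \<noteq> j" "\<not> lt (U t) (L j)"
    then show "\<not> is_minimal l r I k t" by (rule not_minimal_if_not_U_less_L)
  qed
qed

end
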